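(* Let $q$ be a prime power with $q\equiv 1 \pmod 3$, let $\delta\in\mathbb{F}_q$ be a cubic nonresidue, and let $\mathbb{F}_q(\delta^{1/3})$ be the cubic extension with $\mathbb{F}_q$-basis $\{1,\delta^{1/3},\delta^{2/3}\}$; write $\alpha=\alpha_1+\alpha_2\delta^{1/3}+\alpha_3\delta^{2/3}$ with $\alpha_i\in\mathbb{F}_q$. Let $\mathbb{H}_q=\{(\alpha,\beta)\in \mathbb{F}_q(\delta^{1/3})^2 : \alpha_2\beta_3-\alpha_3\beta_2\neq 0\}$ with the action of $\mathrm{GL}_3(\mathbb{F}_q)$ given by \[ \begin{bmatrix} a & b & c\\ d & e & f\\ r & s & t \end{bmatrix} (\alpha,\beta) = \left(\frac{a\alpha+b\beta+c}{r\alpha+s\beta+t}, \frac{d\alpha+e\beta+f}{r\alpha+s\beta+t} \right). \] Let \[H=\left\{\begin{bmatrix} d & y & x\\ 0 & c & b\\ 0 & 0 & d\end{bmatrix} : c,d\in\mathbb{F}_q^\times,\ b,x,y\in\mathbb{F}_q\right\}\] (the centralizer in $\mathrm{GL}_3(\mathbb{F}_q)$ of $\begin{bmatrix} a&0&a\\0&a&0\\0&0&a\end{bmatrix}$, $a\neq 0$). Then \[\{(u\delta^{1/3},\,v\delta^{1/3}+\delta^{2/3}) : u,v\in\mathbb{F}_q,\ u\neq 0\}\ \sqcup\ \{(\delta^{1/3}+u\delta^{2/3},\,\delta^{1/3}) : u\in\mathbb{F}_q^\times\}\] is a fundamental domain for the action of $H$ on $\mathbb{H}_q$.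
   Context: A fundamental domain for the action of a subgroup $H$ on $\mathbb{H}_q$ is a subset of $\mathbb{H}_q$ containing exactly one element of each $H$-orbit. A cubic nonresidue is an element of $\mathbb{F}_q^\times$ that is not a cube in $\mathbb{F}_q$. *)

theory Defs
  imports Main
begin

text \<open>Elements of the cubic extension F_q(delta^(1/3)) are represented by their
coordinate triples (a1,a2,a3) w.r.t. the F_q-basis 1, delta^(1/3), delta^(2/3).\<close>

type_synonym 'a ext = "'a \<times> 'a \<times> 'a"

definition c1 :: "'a ext \<Rightarrow> 'a" where "c1 z = fst z"
definition c2 :: "'a ext \<Rightarrow> 'a" where "c2 z = fst (snd z)"
definition c3 :: "'a ext \<Rightarrow> 'a" where "c3 z = snd (snd z)"

definition cubic_nonresidue :: "'a::field \<Rightarrow> bool" where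
  "cubic_nonresidue \<delta> \<longleftrightarrow> \<delta> \<noteq> 0 \<and> \<not> (\<exists>x. x ^ 3 = \<delta>)"

definition ext_of :: "'a::field \<Rightarrow> 'a ext" where
  "ext_of a = (a, 0, 0)"

definition ext_add :: "'a::field ext \<Rightarrow> 'a ext \<Rightarrow> 'a ext" where
  "ext_add z w = (c1 z + c1 w, c2 z + c2 w, c3 z + c3 w)"

definition ext_smul :: "'a::field \<Rightarrow> 'a ext \<Rightarrow> 'a ext" where
  "ext_smul a z = (a * c1 z, a * c2 z, a * c3 z)"

text \<open>Multiplication using (delta^(1/3))^3 = delta.\<close>
definition ext_mul :: "'a::field \<Rightarrow> 'a ext \<Rightarrow> 'a ext \<Rightarrow> 'a ext" where
  "ext_mul \<delta> z w =
     (c1 z * c1 w + \<delta> * (c2 z * c3 w + c3 z * c2 w),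
      c1 z * c2 w + c2 z * c1 w + \<delta> * (c3 z * c3 w),
      c1 z * c3 w + c2 z * c2 w + c3 z * c1 w)"

text \<open>Division in the cubic extension (a field when delta is a cubic nonresidue).\<close>
definition ext_div :: "'a::field \<Rightarrow> 'a ext \<Rightarrow> 'a ext \<Rightarrow> 'a ext" where
  "ext_div \<delta> z w = (THE u. ext_mul \<delta> u w = z)"

definition Hq :: "'a::field itself \<Rightarrow> ('a ext \<times> 'a ext) set" where
  "Hq _ = {(\<alpha>, \<beta>). c2 \<alpha> * c3 \<beta> - c3 \<alpha> * c2 \<beta> \<noteq> 0}"

text \<open>3x3 matrices as functions of (row, column) indices 0,1,2.\<close>
type_synonym 'a mat3 = "nat \<Rightarrow> nat \<Rightarrow> 'a"

definition mat3 :: "'a::zero \<Rightarrow> 'a \<Rightarrow> 'a \<Rightarrow> 'a \<Rightarrow> 'a \<Rightarrow> 'a \<Rightarrow> 'a \<Rightarrow> 'a \<Rightarrow> 'a \<Rightarrow> 'a mat3" where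
  "mat3 a b c d e f r s t = (\<lambda>i j.
     if i = 0 \<and> j = 0 then a else if i = 0 \<and> j = 1 then b else if i = 0 \<and> j = 2 then c else
     if i = 1 \<and> j = 0 then d else if i = 1 \<and> j = 1 then e else if i = 1 \<and> j = 2 then f else
     if i = 2 \<and> j = 0 then r else if i = 2 \<and> j = 1 then s else if i = 2 \<and> j = 2 then t else 0)"

definition lin3 :: "'a::field \<Rightarrow> 'a \<Rightarrow> 'a \<Rightarrow> 'a ext \<Rightarrow> 'a ext \<Rightarrow> 'a ext" where
  "lin3 a b c \<alpha> \<beta> = ext_add (ext_add (ext_smul a \<alpha>) (ext_smul b \<beta>)) (ext_of c)"

definition act :: "'a::field \<Rightarrow> 'a mat3 \<Rightarrow> 'a ext \<times> 'a ext \<Rightarrow> 'a ext \<times> 'a ext" where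
  "act \<delta> M p = (let \<alpha> = fst p; \<beta> = snd p;
                    den = lin3 (M 2 0) (M 2 1) (M 2 2) \<alpha> \<beta> in
     (ext_div \<delta> (lin3 (M 0 0) (M 0 1) (M 0 2) \<alpha> \<beta>) den,
      ext_div \<delta> (lin3 (M 1 0) (M 1 1) (M 1 2) \<alpha> \<beta>) den))"

definition Hgrp :: "'a::field itself \<Rightarrow> 'a mat3 set" where
  "Hgrp _ = {mat3 d y x 0 c b 0 0 d | c d b x y. c \<noteq> 0 \<and> d \<noteq> 0}"

definition orbit :: "'a::field \<Rightarrow> 'a mat3 set \<Rightarrow> 'a ext \<times> 'a ext \<Rightarrow> ('a ext \<times> 'a ext) set" where
  "orbit \<delta> G p = (\<lambda>M. act \<delta> M p) ` G"

definition fundamental_domain ::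
  "'a::field \<Rightarrow> 'a mat3 set \<Rightarrow> ('a ext \<times> 'a ext) set \<Rightarrow> ('a ext \<times> 'a ext) set \<Rightarrow> bool" where
  "fundamental_domain \<delta> G X D \<longleftrightarrow> D \<subseteq> X \<and> (\<forall>p\<in>X. \<exists>!z. z \<in> D \<and> z \<in> orbit \<delta> G p)"

end

theory Submission
  imports Defs
begin

text \<open>Every matrix of H has bottom row (0, 0, d), so it acts by the affine map
  (\<alpha>, \<beta>) \<mapsto> (\<alpha> + s\<beta> + t, \<lambda>\<beta> + w) with s, t, w \<in> F_q and \<lambda> \<in> F_q^*.
  The translations clear the 1-coordinates, and on the (\<delta>^(1/3), \<delta>^(2/3))-coordinates
  the orbit of (A, B) is {(A + sB, \<lambda>B)}.  If B = (b2, b3) with b3 \<noteq> 0 it has the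
  unique representative ((a2 - a3 b2/b3, 0), (b2/b3, 1)); if b3 = 0 then b2 \<noteq> 0 and
  a3 \<noteq> 0, and the unique representative is ((1, a3), (1, 0)).  Only scalar division
  occurs.\<close>

lemma ext_div_scalar:
  fixes d :: "'a::field"
  assumes "d \<noteq> 0"
  shows "ext_div \<delta> z (d, 0, 0) = (c1 z / d, c2 z / d, c3 z / d)"
proof -
  have "ext_mul \<delta> u (d, 0, 0) = z \<longleftrightarrow> u = (c1 z / d, c2 z / d, c3 z / d)" for u
    using assms by (cases u; cases z) (auto simp: ext_mul_def c1_def c2_def c3_def field_simps)
  then show ?thesis unfolding ext_div_def by simp
qed

lemma act_Hgrp_matrix:
  fixes d :: "'a::field"
  assumes "d \<noteq> 0"
  shows "act \<delta> (mat3 d y x 0 c b 0 0 d) ((a1, a2, a3), (b1, b2, b3)) =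
    (((d*a1 + y*b1 + x) / d, (d*a2 + y*b2) / d, (d*a3 + y*b3) / d),
     ((c*b1 + b) / d, c*b2 / d, c*b3 / d))"
proof -
  have "lin3 0 0 d (a1, a2, a3) (b1, b2, b3) = (d, 0, 0)"
    by (simp add: lin3_def ext_add_def ext_smul_def ext_of_def c1_def c2_def c3_def)
  then show ?thesis using assms
    by (simp add: act_def mat3_def ext_div_scalar lin3_def ext_add_def ext_smul_def
        ext_of_def c1_def c2_def c3_def)
qed

lemma orbit_Hgrp_iff:
  "z \<in> orbit \<delta> (Hgrp TYPE('a::field)) ((a1, a2, a3), (b1, b2, b3)) \<longleftrightarrow>
   (\<exists>s l t w. l \<noteq> 0 \<and> z = ((t, a2 + s*b2, a3 + s*b3), (w, l*b2, l*b3)))"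
proof
  assume "z \<in> orbit \<delta> (Hgrp TYPE('a)) ((a1, a2, a3), (b1, b2, b3))"
  then obtain c d b x y where cd: "c \<noteq> 0" "d \<noteq> 0"
    and z: "z = act \<delta> (mat3 d y x 0 c b 0 0 d) ((a1, a2, a3), (b1, b2, b3))"
    unfolding orbit_def Hgrp_def by blast
  have "z = (((d*a1 + y*b1 + x) / d, a2 + (y/d)*b2, a3 + (y/d)*b3),
             ((c*b1 + b) / d, (c/d)*b2, (c/d)*b3))"
    using cd by (simp add: z act_Hgrp_matrix field_simps)
  with cd show "\<exists>s l t w. l \<noteq> 0 \<and> z = ((t, a2 + s*b2, a3 + s*b3), (w, l*b2, l*b3))"
    by (metis divide_eq_0_iff)
next
  assume "\<exists>s l t w. l \<noteq> 0 \<and> z = ((t, a2 + s*b2, a3 + s*b3), (w, l*b2, l*b3))"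
  then obtain s l t w where l: "l \<noteq> 0"
    and z: "z = ((t, a2 + s*b2, a3 + s*b3), (w, l*b2, l*b3))" by blast
  define M where "M = mat3 1 s (t - a1 - s*b1) 0 l (w - l*b1) 0 0 (1::'a)"
  have "M \<in> Hgrp TYPE('a)" unfolding M_def Hgrp_def using l by fastforce
  moreover have "act \<delta> M ((a1, a2, a3), (b1, b2, b3)) = z"
    unfolding M_def z by (simp add: act_Hgrp_matrix)
  ultimately show "z \<in> orbit \<delta> (Hgrp TYPE('a)) ((a1, a2, a3), (b1, b2, b3))"
    unfolding orbit_def by blast
qed

lemma fundamental_domain_by_normal_form:
  assumes "D \<subseteq> X"
    and "\<And>p. p \<in> X \<Longrightarrow> nf p \<in> D \<and> nf p \<in> orbit \<delta> G p"
    and "\<And>p z. p \<in> X \<Longrightarrow> z \<in> orbit \<delta> G p \<Longrightarrow> nf z = nf p"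
    and "\<And>z. z \<in> D \<Longrightarrow> nf z = z"
  shows "fundamental_domain \<delta> G X D"
  unfolding fundamental_domain_def using assms by (metis subsetD)

definition Hgrp_normal_form :: "'a::field ext \<times> 'a ext \<Rightarrow> 'a ext \<times> 'a ext" where
  "Hgrp_normal_form p =
     (let a2 = c2 (fst p); a3 = c3 (fst p); b2 = c2 (snd p); b3 = c3 (snd p) in
      if b3 \<noteq> 0 then ((0, a2 - a3*b2/b3, 0), (0, b2/b3, 1)) else ((0, 1, a3), (0, 1, 0)))"

lemma Hgrp_normal_form_orbit_invariant:
  assumes "z \<in> orbit \<delta> (Hgrp TYPE('a::field)) p"
  shows "Hgrp_normal_form z = Hgrp_normal_form p"
proof -
  obtain a1 a2 a3 b1 b2 b3 :: 'a where p: "p = ((a1, a2, a3), (b1, b2, b3))"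
    by (metis prod.collapse)
  obtain s l t w where l: "l \<noteq> 0" and z: "z = ((t, a2 + s*b2, a3 + s*b3), (w, l*b2, l*b3))"
    using assms unfolding p orbit_Hgrp_iff by blast
  have "a2 + s*b2 - (a3 + s*b3) * (l*b2) / (l*b3) = a2 - a3*b2/b3" if "b3 \<noteq> 0"
    using l that by (simp add: field_simps)
  then show ?thesis
    using l by (simp add: Hgrp_normal_form_def p z c2_def c3_def)
qed

lemma Hgrp_normal_form_mem_orbit:
  assumes "p \<in> Hq TYPE('a::field)"
  shows "Hgrp_normal_form p \<in> orbit \<delta> (Hgrp TYPE('a)) p"
proof -
  obtain a1 a2 a3 b1 b2 b3 :: 'a where p: "p = ((a1, a2, a3), (b1, b2, b3))"
    by (metis prod.collapse)
  have det: "a2*b3 - a3*b2 \<noteq> 0" using assms by (simp add: p Hq_def c2_def c3_def)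
  show ?thesis
  proof (cases "b3 = 0")
    case False
    show ?thesis unfolding p orbit_Hgrp_iff
      by (rule exI[of _ "-a3/b3"], rule exI[of _ "1/b3"])
        (use False in \<open>simp add: Hgrp_normal_form_def c2_def c3_def field_simps\<close>)
  next
    case True
    with det have "b2 \<noteq> 0" by auto
    show ?thesis unfolding p orbit_Hgrp_iff
      by (rule exI[of _ "(1 - a2)/b2"], rule exI[of _ "1/b2"])
        (use True \<open>b2 \<noteq> 0\<close> in \<open>simp add: Hgrp_normal_form_def c2_def c3_def field_simps\<close>)
  qed
qed

lemma Hgrp_normal_form_mem_domain:
  assumes "p \<in> Hq TYPE('a::field)"
  shows "Hgrp_normal_form p \<in> {((0, u, 0), (0, v, 1)) | u v :: 'a. u \<noteq> 0}
           \<union> {((0, 1, u), (0, 1, 0)) | u :: 'a. u \<noteq> 0}"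
proof -
  obtain a1 a2 a3 b1 b2 b3 :: 'a where p: "p = ((a1, a2, a3), (b1, b2, b3))"
    by (metis prod.collapse)
  have det: "a2*b3 - a3*b2 \<noteq> 0" using assms by (simp add: p Hq_def c2_def c3_def)
  then have "a2 - a3*b2/b3 \<noteq> 0" if "b3 \<noteq> 0"
    using that by (simp add: field_simps)
  with det show ?thesis by (auto simp: Hgrp_normal_form_def p c2_def c3_def)
qed

theorem proposition5p1:
  fixes \<delta> :: "'a::{finite, field}"
  assumes "card (UNIV :: 'a set) mod 3 = 1"
    and "cubic_nonresidue \<delta>"
  defines "D1 \<equiv> {((0, u, 0), (0, v, 1)) | u v :: 'a. u \<noteq> 0}"
    and "D2 \<equiv> {((0, 1, u), (0, 1, 0)) | u :: 'a. u \<noteq> 0}"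
  shows "D1 \<inter> D2 = {} \<and> fundamental_domain \<delta> (Hgrp TYPE('a)) (Hq TYPE('a)) (D1 \<union> D2)"
proof
  show "D1 \<inter> D2 = {}" unfolding D1_def D2_def by auto
  show "fundamental_domain \<delta> (Hgrp TYPE('a)) (Hq TYPE('a)) (D1 \<union> D2)"
  proof (rule fundamental_domain_by_normal_form[where nf = Hgrp_normal_form])
    show "D1 \<union> D2 \<subseteq> Hq TYPE('a)"
      unfolding D1_def D2_def Hq_def by (auto simp: c2_def c3_def)
    show "Hgrp_normal_form p \<in> D1 \<union> D2 \<and> Hgrp_normal_form p \<in> orbit \<delta> (Hgrp TYPE('a)) p"
      if "p \<in> Hq TYPE('a)" for p
      using that Hgrp_normal_form_mem_domain Hgrp_normal_form_mem_orbit
      unfolding D1_def D2_def by blast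
    show "Hgrp_normal_form z = Hgrp_normal_form p" if "z \<in> orbit \<delta> (Hgrp TYPE('a)) p" for p z
      using that by (rule Hgrp_normal_form_orbit_invariant)
    show "Hgrp_normal_form z = z" if "z \<in> D1 \<union> D2" for z
      using that unfolding D1_def D2_def by (auto simp: Hgrp_normal_form_def c2_def c3_def)
  qed
qed

end
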